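(* Consider the random coefficients perturbed utility model in which optimizing choices satisfy $Y(X,\beta,\varepsilon) \in \arg\max_{y \in B} \sum_{k=1}^K y_k(\beta_k' X_k) + D(y,\varepsilon)$, where $X=(X_1',\ldots,X_K')'$ with $X_k=(X_{k,1},\ldots,X_{k,d_k})'$ and $\beta=(\beta_1',\ldots,\beta_K')'$ with $\beta_k=(\beta_{k,1},\ldots,\beta_{k,d_k})'$. Let $\overline{Y}(x)=\int Y(x,\beta,\varepsilon)\,d\tau(\beta,\varepsilon)$ be the average structural function, let $\overline{Y}(x,\beta)=\int Y(x,\beta,\varepsilon)\,d\mu(\varepsilon)$, and let $V(\beta_1'x_1,\ldots,\beta_K'x_K)=\max_{y\in\overline{B}}\sum_{k=1}^K y_k(\beta_k'x_k)+\overline{D}(y)$ be the integrated indirect utility function. Suppose that for each natural number $M \le \overline{M}$ (where $\overline{M}$ could be $\infty$) the following hold: (a) (Slope-intercept independence) $\beta$ and $\varepsilon$ are independent under $\tau$, so $\tau=\nu\times\mu$ with $\nu$ the distribution of $\beta$ and $\mu$ that of $\varepsilon$, and $\overline{Y}(x)$ is finite; (b) $\overline{Y}(x,\beta)$ is the unique element of $\arg\max_{y\in\overline{B}}\sum_{k=1}^K y_k(\beta_k'x_k)+\overline{D}(y)$, where $\overline{B}\subseteq\mathbb{R}^K$ is nonempty, closed and convex, and $\overline{D}:\mathbb{R}^K\to\mathbb{R}\cup\{-\infty\}$ is concave, upper semi-continuous and finite at some $y\in\overline{B}$; (c) all covariates are continuous and each $x_k$ is a vector of regressors specific to good $k$ (excluded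 from the other goods' indices); (d) (Regularity) (i) for each good $k$, integration over $\nu$ and all $M$-th order partial derivatives in $x$ of $\overline{Y}_k(x,\beta)$ at $x=0$ can be interchanged; (ii) every $M$-th order moment $\int \beta_{k_1,\ell_1}\cdots\beta_{k_M,\ell_M}\,d\nu(\beta)$ exists and is finite; (iii) $V$ is $(M+1)$-times continuously differentiable in a neighborhood of $0$; (iv) $\partial_\gamma V(0)\neq 0$ for every $\gamma\in\{1,\ldots,K\}^{M+1}$; (v) $\overline{Y}(x)$ is known in a neighborhood of $x=0$, or more generally in a neighborhood of $0$ intersected with the weakly positive orthant of $\mathbb{R}^{\sum_k d_k}$; (e) (Relevance) for each tuple of good indices $(k_1,\ldots,k_M)\in\{1,\ldots,K\}^M$ there is a tuple of characteristic indices $(\ell_1,\ldots,\ell_M)\in\prod_{m=1}^M\{1,\ldots,d_{k_m}\}$ such that $\int \beta_{k_1,\ell_1}\cdots\beta_{k_M,\ell_M}\,d\nu(\beta)$ exists and is nonzero; (f) under $\nu$, $\beta_{1,1}$ is independent of all other components of $\beta$, and $|\int\beta_{1,1}\,d\nu(\beta)|$ is finite, known a priori, and nonzero. If $K\ge 2$, then for each $M\le\overline{M}$ every $M$-th order moment $\int \beta_{k_1,\ell_1}\cdots\beta_{k_M,\ell_M}\,d\nu(\beta)$ is identified, and for each $\gamma\in\{1,\ldots,K\}^{M+1}$ the derivative $\partial_\gamma V(0)$ is identified. If $K=1$, the same conclusions hold under conditions (a)–(f) given the additional assumption that for each $M\le\overline{M}$ there exists an order $M-1$ moment with $\int \beta_{1,\ell_1}\cdots\beta_{1,\ell_{M-1}}\,d\nu(\beta)\neq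 0$, where $\ell_m\neq 1$ for every $m\in\{1,\ldots,M-1\}$.
   Context: Here $\partial_\gamma f=\partial_{\gamma_1}\cdots\partial_{\gamma_M}f$ for an index vector $\gamma$, with $\partial_k$ denoting the derivative with respect to the $k$-th argument of $V$; $B\subseteq\mathbb{R}^K$ is a feasibility set with convex hull $\overline{B}$; $D(y,\varepsilon)$ is a disturbance (random intercept) that may take the value $-\infty$; and $\overline{D}(y)=\sup_{\tilde Y:\int \tilde Y(\varepsilon)d\mu(\varepsilon)=y}\int D(\tilde Y(\varepsilon),\varepsilon)\,d\mu(\varepsilon)$ over $\varepsilon$-measurable $\tilde Y$ mapping into $B$. This result replaces the scale assumption that $\int\beta_{1,1}^M d\nu(\beta)$ is known and nonzero (used in the paper's main theorem) by independence of $\beta_{1,1}$ plus a single scale assumption on its first moment. *)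

theory Defs
  imports "HOL-Probability.Probability"
begin

text \<open>
Goods are indexed by a finite type 'k (K = CARD('k)); regressor coordinates
(k,l), l = 1..d_k, are indexed by a finite type 'r together with the map
good :: 'r => 'k sending a coordinate to the good it belongs to (so x_k is the
subvector of x on the coordinates r with good r = k).
\<close>

definition idx :: "('r::finite \<Rightarrow> 'k::finite) \<Rightarrow> real^'r \<Rightarrow> real^'r \<Rightarrow> real^'k" where
  "idx good x \<beta> = (\<chi> k. \<Sum>r\<in>{r. good r = k}. \<beta>$r * x$r)"

definition optimal_choices ::
  "('r::finite \<Rightarrow> 'k::finite) \<Rightarrow> (real^'k) set \<Rightarrow> (real^'k \<Rightarrow> 'e \<Rightarrow> ereal)
   \<Rightarrow> (real^'r \<Rightarrow> real^'r \<Rightarrow> 'e \<Rightarrow> real^'k) \<Rightarrow> bool" where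
  "optimal_choices good B D Y \<longleftrightarrow>
     (\<forall>y \<epsilon>. D y \<epsilon> \<noteq> \<infinity>) \<and>
     (\<forall>x \<beta> \<epsilon>. Y x \<beta> \<epsilon> \<in> B \<and>
        (\<forall>y\<in>B. ereal (y \<bullet> idx good x \<beta>) + D y \<epsilon>
                \<le> ereal (Y x \<beta> \<epsilon> \<bullet> idx good x \<beta>) + D (Y x \<beta> \<epsilon>) \<epsilon>))"

definition Ybar_xb :: "'e measure \<Rightarrow> (real^'r \<Rightarrow> real^'r \<Rightarrow> 'e \<Rightarrow> real^'k::finite)
   \<Rightarrow> real^'r \<Rightarrow> real^'r \<Rightarrow> real^'k" where
  "Ybar_xb \<mu> Y x \<beta> = (\<integral>\<epsilon>. Y x \<beta> \<epsilon> \<partial>\<mu>)"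

definition Ybar :: "(real^'r::finite) measure \<Rightarrow> 'e measure
   \<Rightarrow> (real^'r \<Rightarrow> real^'r \<Rightarrow> 'e \<Rightarrow> real^'k::finite) \<Rightarrow> real^'r \<Rightarrow> real^'k" where
  "Ybar \<nu> \<mu> Y x = (\<integral>z. Y x (fst z) (snd z) \<partial>(\<nu> \<Otimes>\<^sub>M \<mu>))"

text \<open>Extended-real integral of a function with values in [-inf, inf]:
int f+ - int f-, taken as -infinity when both parts are infinite (undefined).\<close>
definition eint :: "'e measure \<Rightarrow> ('e \<Rightarrow> ereal) \<Rightarrow> ereal" where
  "eint \<mu> f =
     (let p = (\<integral>\<^sup>+\<epsilon>. e2ennreal (f \<epsilon>) \<partial>\<mu>);
          n = (\<integral>\<^sup>+\<epsilon>. e2ennreal (- f \<epsilon>) \<partial>\<mu>)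
      in if p = \<infinity> \<and> n = \<infinity> then - \<infinity> else enn2ereal p - enn2ereal n)"

definition Bbar :: "(real^'k::finite) set \<Rightarrow> (real^'k) set" where
  "Bbar B = convex hull B"

definition Dbar :: "'e measure \<Rightarrow> (real^'k::finite) set \<Rightarrow> (real^'k \<Rightarrow> 'e \<Rightarrow> ereal)
   \<Rightarrow> real^'k \<Rightarrow> ereal" where
  "Dbar \<mu> B D y = Sup {eint \<mu> (\<lambda>\<epsilon>. D (Yt \<epsilon>) \<epsilon>) | Yt.
       Yt \<in> borel_measurable \<mu> \<and> (\<forall>\<epsilon>\<in>space \<mu>. Yt \<epsilon> \<in> B) \<and>
       integrable \<mu> Yt \<and> (\<integral>\<epsilon>. Yt \<epsilon> \<partial>\<mu>) = y}"

definition Vfun :: "'e measure \<Rightarrow> (real^'k::finite) set \<Rightarrow> (real^'k \<Rightarrow> 'e \<Rightarrow> ereal)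
   \<Rightarrow> real^'k \<Rightarrow> real" where
  "Vfun \<mu> B D u = real_of_ereal (Sup {ereal (y \<bullet> u) + Dbar \<mu> B D y | y. y \<in> Bbar B})"

fun pdiff :: "'i::finite list \<Rightarrow> (real^'i \<Rightarrow> real) \<Rightarrow> real^'i \<Rightarrow> real" where
  "pdiff [] f = f"
| "pdiff (i # \<gamma>) f = (\<lambda>x. deriv (\<lambda>t. pdiff \<gamma> f (x + t *\<^sub>R axis i 1)) 0)"

fun pd_exists :: "'i::finite list \<Rightarrow> (real^'i \<Rightarrow> real) \<Rightarrow> real^'i \<Rightarrow> bool" where
  "pd_exists [] f x = True"
| "pd_exists (i # \<gamma>) f x =
     ((\<forall>\<^sub>F z in nhds x. pd_exists \<gamma> f z) \<and>
      (\<lambda>t. pdiff \<gamma> f (x + t *\<^sub>R axis i 1)) differentiable (at 0))"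

definition Ck_on :: "nat \<Rightarrow> (real^'i::finite) set \<Rightarrow> (real^'i \<Rightarrow> real) \<Rightarrow> bool" where
  "Ck_on m U f \<longleftrightarrow> (\<forall>\<gamma>. length \<gamma> \<le> m \<longrightarrow>
      (\<forall>z\<in>U. pd_exists \<gamma> f z) \<and> continuous_on U (pdiff \<gamma> f))"

definition moment :: "(real^'r::finite) measure \<Rightarrow> 'r list \<Rightarrow> real" where
  "moment \<nu> rs = (\<integral>\<beta>. prod_list (map (\<lambda>r. \<beta>$r) rs) \<partial>\<nu>)"

definition moment_exists :: "(real^'r::finite) measure \<Rightarrow> 'r list \<Rightarrow> bool" where
  "moment_exists \<nu> rs \<longleftrightarrow> integrable \<nu> (\<lambda>\<beta>. prod_list (map (\<lambda>r. \<beta>$r) rs))"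

definition assm_a :: "(real^'r::finite) measure \<Rightarrow> 'e measure
   \<Rightarrow> (real^'r \<Rightarrow> real^'r \<Rightarrow> 'e \<Rightarrow> real^'k::finite) \<Rightarrow> bool" where
  "assm_a \<nu> \<mu> Y \<longleftrightarrow> prob_space \<nu> \<and> sets \<nu> = sets borel \<and> prob_space \<mu> \<and>
     (\<forall>x. integrable (\<nu> \<Otimes>\<^sub>M \<mu>) (\<lambda>z. Y x (fst z) (snd z)))"

definition assm_b :: "('r::finite \<Rightarrow> 'k::finite) \<Rightarrow> 'e measure \<Rightarrow> (real^'k) set
   \<Rightarrow> (real^'k \<Rightarrow> 'e \<Rightarrow> ereal) \<Rightarrow> (real^'r \<Rightarrow> real^'r \<Rightarrow> 'e \<Rightarrow> real^'k) \<Rightarrow> bool" where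
  "assm_b good \<mu> B D Y \<longleftrightarrow>
     Bbar B \<noteq> {} \<and> closed (Bbar B) \<and> convex (Bbar B) \<and>
     (\<forall>y. Dbar \<mu> B D y \<noteq> \<infinity>) \<and>
     (\<forall>y z t. 0 < t \<longrightarrow> t < 1 \<longrightarrow>
        ereal t * Dbar \<mu> B D y + ereal (1 - t) * Dbar \<mu> B D z
          \<le> Dbar \<mu> B D (t *\<^sub>R y + (1 - t) *\<^sub>R z)) \<and>
     (\<forall>y c. Dbar \<mu> B D y < c \<longrightarrow> (\<forall>\<^sub>F z in nhds y. Dbar \<mu> B D z < c)) \<and>
     (\<exists>y\<in>Bbar B. Dbar \<mu> B D y \<noteq> - \<infinity>) \<and>
     (\<forall>x \<beta>. {y \<in> Bbar B. \<forall>z\<in>Bbar B.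
               ereal (z \<bullet> idx good x \<beta>) + Dbar \<mu> B D z
                 \<le> ereal (y \<bullet> idx good x \<beta>) + Dbar \<mu> B D y}
             = {Ybar_xb \<mu> Y x \<beta>})"

definition assm_d :: "nat \<Rightarrow> (real^'r::finite) measure \<Rightarrow> 'e measure \<Rightarrow> (real^'k::finite) set
   \<Rightarrow> (real^'k \<Rightarrow> 'e \<Rightarrow> ereal) \<Rightarrow> (real^'r \<Rightarrow> real^'r \<Rightarrow> 'e \<Rightarrow> real^'k) \<Rightarrow> bool" where
  "assm_d M \<nu> \<mu> B D Y \<longleftrightarrow>
     (\<forall>k \<gamma>. length \<gamma> = M \<longrightarrow>
        pd_exists \<gamma> (\<lambda>x. \<integral>\<beta>. Ybar_xb \<mu> Y x \<beta> $ k \<partial>\<nu>) 0 \<and>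
        (AE \<beta> in \<nu>. pd_exists \<gamma> (\<lambda>x. Ybar_xb \<mu> Y x \<beta> $ k) 0) \<and>
        integrable \<nu> (\<lambda>\<beta>. pdiff \<gamma> (\<lambda>x. Ybar_xb \<mu> Y x \<beta> $ k) 0) \<and>
        pdiff \<gamma> (\<lambda>x. \<integral>\<beta>. Ybar_xb \<mu> Y x \<beta> $ k \<partial>\<nu>) 0
          = (\<integral>\<beta>. pdiff \<gamma> (\<lambda>x. Ybar_xb \<mu> Y x \<beta> $ k) 0 \<partial>\<nu>)) \<and>
     (\<forall>rs. length rs = M \<longrightarrow> moment_exists \<nu> rs) \<and>
     (\<exists>U. open U \<and> 0 \<in> U \<and> Ck_on (Suc M) U (Vfun \<mu> B D)) \<and>
     (\<forall>\<gamma>::'k list. length \<gamma> = Suc M \<longrightarrow> pdiff \<gamma> (Vfun \<mu> B D) 0 \<noteq> 0)"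

definition assm_e :: "nat \<Rightarrow> ('r::finite \<Rightarrow> 'k::finite) \<Rightarrow> (real^'r) measure \<Rightarrow> bool" where
  "assm_e M good \<nu> \<longleftrightarrow>
     (\<forall>ks::'k list. length ks = M \<longrightarrow>
        (\<exists>rs. map good rs = ks \<and> moment_exists \<nu> rs \<and> moment \<nu> rs \<noteq> 0))"

definition assm_f :: "'r::finite \<Rightarrow> (real^'r) measure \<Rightarrow> bool" where
  "assm_f r1 \<nu> \<longleftrightarrow>
     (\<forall>A \<in> sets (borel :: real measure). \<forall>C \<in> sets (borel :: (real^'r) measure).
        measure \<nu> {\<beta>\<in>space \<nu>. \<beta>$r1 \<in> A \<and> (\<chi> r. if r = r1 then 0 else \<beta>$r) \<in> C}
        = measure \<nu> {\<beta>\<in>space \<nu>. \<beta>$r1 \<in> A}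
          * measure \<nu> {\<beta>\<in>space \<nu>. (\<chi> r. if r = r1 then 0 else \<beta>$r) \<in> C}) \<and>
     integrable \<nu> (\<lambda>\<beta>. \<beta>$r1) \<and> (\<integral>\<beta>. \<beta>$r1 \<partial>\<nu>) \<noteq> 0"

definition model_assumptions :: "('r::finite \<Rightarrow> 'k::finite) \<Rightarrow> 'r \<Rightarrow> enat
   \<Rightarrow> (real^'r) measure \<Rightarrow> 'e measure \<Rightarrow> (real^'k) set
   \<Rightarrow> (real^'k \<Rightarrow> 'e \<Rightarrow> ereal) \<Rightarrow> (real^'r \<Rightarrow> real^'r \<Rightarrow> 'e \<Rightarrow> real^'k) \<Rightarrow> bool" where
  "model_assumptions good r1 Mbar \<nu> \<mu> B D Y \<longleftrightarrow>
     optimal_choices good B D Y \<and> assm_a \<nu> \<mu> Y \<and> assm_b good \<mu> B D Y \<and> assm_f r1 \<nu> \<and>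
     (\<forall>M::nat. 1 \<le> M \<longrightarrow> enat M \<le> Mbar \<longrightarrow> assm_d M \<nu> \<mu> B D Y \<and> assm_e M good \<nu>)"

definition K1_condition :: "'r::finite \<Rightarrow> enat \<Rightarrow> (real^'r) measure \<Rightarrow> bool" where
  "K1_condition r1 Mbar \<nu> \<longleftrightarrow>
     (\<forall>M::nat. 1 \<le> M \<longrightarrow> enat M \<le> Mbar \<longrightarrow>
        (\<exists>rs. length rs = M - 1 \<and> (\<forall>r\<in>set rs. r \<noteq> r1) \<and>
              moment_exists \<nu> rs \<and> moment \<nu> rs \<noteq> 0))"

end

(*
  Differentiating the observed average structural function M times at x = 0, and using the
  envelope theorem Ybar(x, beta) = grad V(beta_1'x_1, ..., beta_K'x_K), gives for every tuple of
  regressor coordinates r_1..r_M and good k the observable product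
    E[beta_r1 ... beta_rM] * d_{good r1} ... d_{good rM} d_k V(0).
  By the symmetry of the derivatives of V and the relevance condition, two structures with the
  same observables differ at order M by a single scale factor s_M: their moments satisfy
  m' = s_M m and the derivatives of V satisfy d V = s_M d V'. At order one, |s_1| = 1 by the
  scale assumption and s_1 >= 0 because V is convex. At higher orders, independence of beta_11
  factors a moment E[beta_11 beta_r1 ... beta_rM] with r_i <> (1,1) into the identified mean of
  beta_11 and an identified nonzero moment of order M (one exists because K >= 2, or by the
  extra assumption when K = 1), which forces s_{M+1} = 1.
*)
theory Submission
  imports Defs
begin

lemma pdiff_append: "pdiff (\<gamma> @ \<delta>) f = pdiff \<gamma> (pdiff \<delta> f)"
  by (induction \<gamma>) auto

lemma pd_exists_append: "pd_exists (\<gamma> @ \<delta>) f x \<Longrightarrow> pd_exists \<gamma> (pdiff \<delta> f) x"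
  by (induction \<gamma> arbitrary: x) (auto simp: pdiff_append elim: eventually_mono)

lemma tendsto_along_axis:
  "((\<lambda>t::real. x + t *\<^sub>R axis i 1) \<longlongrightarrow> (x::real^'i::finite)) (nhds 0)"
proof -
  have "((\<lambda>t::real. x + t *\<^sub>R axis i 1) \<longlongrightarrow> x + 0 *\<^sub>R axis i 1) (nhds 0)"
    by (intro tendsto_intros filterlim_ident)
  then show ?thesis by simp
qed

lemma eventually_along_axis:
  "eventually P (nhds (x::real^'i::finite)) \<Longrightarrow>
   eventually (\<lambda>t::real. P (x + t *\<^sub>R axis i 1)) (nhds 0)"
  using tendsto_along_axis[of x i] unfolding filterlim_iff by blast

lemma pdiff_cong_nhds:
  fixes f g :: "real^'i::finite \<Rightarrow> real"
  shows "eventually (\<lambda>z. f z = g z) (nhds x) \<Longrightarrow> pdiff \<gamma> f x = pdiff \<gamma> g x"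
proof (induction \<gamma> arbitrary: x)
  case Nil
  then show ?case using eventually_nhds_x_imp_x by auto
next
  case (Cons i \<gamma>)
  have "eventually (\<lambda>z. eventually (\<lambda>w. f w = g w) (nhds z)) (nhds x)"
    using Cons.prems by (simp add: eventually_eventually)
  then have "eventually (\<lambda>z. pdiff \<gamma> f z = pdiff \<gamma> g z) (nhds x)"
    by (rule eventually_mono) (rule Cons.IH)
  from eventually_along_axis[OF this, of i]
  show ?case by (simp add: deriv_cong_ev)
qed

lemma pdiff_Cons_cong_open:
  assumes "open U" "z \<in> U" "\<And>w. w \<in> U \<Longrightarrow> pdiff \<gamma> f w = pdiff \<delta> f w"
  shows "pdiff (i # \<gamma>) f z = pdiff (i # \<delta>) f z"
proof -
  have "eventually (\<lambda>w. pdiff \<gamma> f w = pdiff \<delta> f w) (nhds z)"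
    using assms eventually_nhds by blast
  then have "pdiff [i] (pdiff \<gamma> f) z = pdiff [i] (pdiff \<delta> f) z"
    by (rule pdiff_cong_nhds)
  then show ?thesis
    using pdiff_append[of "[i]" \<gamma> f] pdiff_append[of "[i]" \<delta> f] by (simp del: pdiff.simps)
qed

lemma Ck_on_mono: "Ck_on n U f \<Longrightarrow> m \<le> n \<Longrightarrow> Ck_on m U f"
  unfolding Ck_on_def by auto

lemma Ck_onD:
  assumes "Ck_on n U f" "length \<gamma> \<le> n"
  shows "z \<in> U \<Longrightarrow> pd_exists \<gamma> f z" and "continuous_on U (pdiff \<gamma> f)"
  using assms unfolding Ck_on_def by auto

lemma Ck_on_pdiff:
  assumes "Ck_on n U f" "length \<delta> \<le> n"
  shows "Ck_on (n - length \<delta>) U (pdiff \<delta> f)"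
  unfolding Ck_on_def
proof (intro allI impI conjI ballI)
  fix \<gamma> :: "'a list" and z assume "length \<gamma> \<le> n - length \<delta>"
  then have "length (\<gamma> @ \<delta>) \<le> n" using assms by simp
  then show "z \<in> U \<Longrightarrow> pd_exists \<gamma> (pdiff \<delta> f) z"
    and "continuous_on U (pdiff \<gamma> (pdiff \<delta> f))"
    using assms(1) unfolding Ck_on_def pdiff_append[symmetric] by (auto intro: pd_exists_append)
qed

section \<open>Symmetry of mixed partial derivatives\<close>

lemma has_real_derivative_along_axis:
  fixes F :: "real^'i::finite \<Rightarrow> real"
  assumes "pd_exists [i] F (w + s *\<^sub>R axis i 1)"
  shows "((\<lambda>s. F (w + s *\<^sub>R axis i 1)) has_real_derivative pdiff [i] F (w + s *\<^sub>R axis i 1)) (at s)"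
proof -
  have "((\<lambda>t. F (w + s *\<^sub>R axis i 1 + t *\<^sub>R axis i 1))
          has_real_derivative pdiff [i] F (w + s *\<^sub>R axis i 1)) (at 0)"
    using assms by (simp add: DERIV_deriv_iff_real_differentiable)
  moreover have "(\<lambda>t. F (w + s *\<^sub>R axis i 1 + t *\<^sub>R axis i 1)) = (\<lambda>t. F (w + (t + s) *\<^sub>R axis i 1))"
    by (simp add: algebra_simps)
  ultimately show ?thesis
    using DERIV_shift[of "\<lambda>s. F (w + s *\<^sub>R axis i 1)" _ 0 s] by simp
qed

lemma second_difference_mvt:
  fixes f :: "real^'i::finite \<Rightarrow> real"
  assumes C: "Ck_on 2 U f" and h: "0 < h" and sub: "cball z (2*h) \<subseteq> U"
  shows "\<exists>p. dist p z \<le> 2*h \<and>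
    f (z + h *\<^sub>R axis j 1 + h *\<^sub>R axis i 1) - f (z + h *\<^sub>R axis i 1) - f (z + h *\<^sub>R axis j 1) + f z
      = h^2 * pdiff [j,i] f p"
proof -
  define ei where "ei = (axis i 1 :: real^'i)"
  define ej where "ej = (axis j 1 :: real^'i)"
  have near: "dist (z + s *\<^sub>R ei + t *\<^sub>R ej) z \<le> 2*h" if "\<bar>s\<bar> \<le> h" "\<bar>t\<bar> \<le> h" for s t
  proof -
    have "dist (z + s *\<^sub>R ei + t *\<^sub>R ej) z \<le> norm (s *\<^sub>R ei) + norm (t *\<^sub>R ej)"
      using norm_triangle_ineq[of "s *\<^sub>R ei" "t *\<^sub>R ej"] by (simp add: dist_norm)
    then show ?thesis using that by (simp add: ei_def ej_def)
  qed
  have inU: "z + s *\<^sub>R ei + t *\<^sub>R ej \<in> U" if "\<bar>s\<bar> \<le> h" "\<bar>t\<bar> \<le> h" for s t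
    using near[OF that] sub by (auto simp: dist_commute)
  have d_i: "pd_exists [i] f w" and d_ji: "pd_exists [j] (pdiff [i] f) w" if "w \<in> U" for w
  proof -
    show "pd_exists [i] f w"
      by (rule Ck_onD(1)[OF C _ that]) simp
    have "pd_exists ([j] @ [i]) f w"
      by (rule Ck_onD(1)[OF C _ that]) simp
    then show "pd_exists [j] (pdiff [i] f) w"
      by (rule pd_exists_append)
  qed
  define g where "g s = f (z + h *\<^sub>R ej + s *\<^sub>R ei) - f (z + s *\<^sub>R ei)" for s
  have "\<exists>\<xi>. 0 < \<xi> \<and> \<xi> < h \<and>
    g h - g 0 = (h - 0) * (pdiff [i] f (z + h *\<^sub>R ej + \<xi> *\<^sub>R ei) - pdiff [i] f (z + \<xi> *\<^sub>R ei))"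
  proof (rule MVT2[OF h])
    fix s assume "0 \<le> s" "s \<le> h"
    then have "z + h *\<^sub>R ej + s *\<^sub>R ei \<in> U" "z + s *\<^sub>R ei \<in> U"
      using inU[of s h] inU[of s 0] h by (simp_all add: algebra_simps)
    then show "(g has_real_derivative
        pdiff [i] f (z + h *\<^sub>R ej + s *\<^sub>R ei) - pdiff [i] f (z + s *\<^sub>R ei)) (at s)"
      unfolding g_def ei_def
      by (intro DERIV_diff has_real_derivative_along_axis d_i)
  qed
  then obtain \<xi> where \<xi>: "0 < \<xi>" "\<xi> < h" and g:
    "g h - g 0 = h * (pdiff [i] f (z + \<xi> *\<^sub>R ei + h *\<^sub>R ej) - pdiff [i] f (z + \<xi> *\<^sub>R ei + 0 *\<^sub>R ej))"
    by (auto simp: algebra_simps)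
  define \<phi> where "\<phi> t = pdiff [i] f (z + \<xi> *\<^sub>R ei + t *\<^sub>R ej)" for t
  have "\<exists>\<eta>. 0 < \<eta> \<and> \<eta> < h \<and> \<phi> h - \<phi> 0 = (h - 0) * pdiff [j,i] f (z + \<xi> *\<^sub>R ei + \<eta> *\<^sub>R ej)"
  proof (rule MVT2[OF h])
    fix t assume "0 \<le> t" "t \<le> h"
    then have "pd_exists [j] (pdiff [i] f) (z + \<xi> *\<^sub>R ei + t *\<^sub>R ej)"
      using d_ji inU \<xi> by auto
    from has_real_derivative_along_axis[OF this[unfolded ej_def]]
    show "(\<phi> has_real_derivative pdiff [j,i] f (z + \<xi> *\<^sub>R ei + t *\<^sub>R ej)) (at t)"
      unfolding \<phi>_def ej_def by simp
  qed
  then obtain \<eta> where \<eta>: "0 < \<eta>" "\<eta> < h" "\<phi> h - \<phi> 0 = h * pdiff [j,i] f (z + \<xi> *\<^sub>R ei + \<eta> *\<^sub>R ej)"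
    by auto
  have "g h - g 0 = h^2 * pdiff [j,i] f (z + \<xi> *\<^sub>R ei + \<eta> *\<^sub>R ej)"
    using g \<eta>(3) unfolding \<phi>_def by (simp add: power2_eq_square)
  moreover have "dist (z + \<xi> *\<^sub>R ei + \<eta> *\<^sub>R ej) z \<le> 2*h"
    using near \<xi> \<eta> by simp
  ultimately show ?thesis
    unfolding g_def by (intro exI[of _ "z + \<xi> *\<^sub>R ei + \<eta> *\<^sub>R ej"]) (simp add: ei_def ej_def algebra_simps)
qed

lemma pdiff_swap:
  fixes f :: "real^'i::finite \<Rightarrow> real"
  assumes C: "Ck_on 2 U f" and U: "open U" and z: "z \<in> U"
  shows "pdiff [j,i] f z = pdiff [i,j] f z"
proof (rule ccontr)
  define A where "A = pdiff [j,i] f"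
  define B where "B = pdiff [i,j] f"
  define d where "d = \<bar>A z - B z\<bar>"
  assume "pdiff [j,i] f z \<noteq> pdiff [i,j] f z"
  then have "0 < d/2" by (simp add: d_def A_def B_def)
  have "isCont A z" "isCont B z"
    using Ck_onD(2)[OF C, of "[j,i]"] Ck_onD(2)[OF C, of "[i,j]"] U z
    by (simp_all add: A_def B_def continuous_on_eq_continuous_at del: pdiff.simps)
  then obtain \<delta>A \<delta>B where \<delta>A: "\<delta>A > 0" "\<And>w. dist w z < \<delta>A \<Longrightarrow> dist (A w) (A z) < d/2"
    and \<delta>B: "\<delta>B > 0" "\<And>w. dist w z < \<delta>B \<Longrightarrow> dist (B w) (B z) < d/2"
    using \<open>0 < d/2\<close> unfolding continuous_at_eps_delta by metis
  obtain r where r: "r > 0" "cball z r \<subseteq> U"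
    using U z open_contains_cball by blast
  obtain h where h: "0 < h" "cball z (2*h) \<subseteq> U"
    and A: "\<And>w. dist w z \<le> 2*h \<Longrightarrow> \<bar>A w - A z\<bar> < d/2"
    and B: "\<And>w. dist w z \<le> 2*h \<Longrightarrow> \<bar>B w - B z\<bar> < d/2"
  proof -
    define h where "h = min \<delta>A (min \<delta>B r) / 3"
    show ?thesis
      by (rule that[of h]) (use \<delta>A \<delta>B r in \<open>auto simp: h_def dist_real_def\<close>)
  qed
  txt \<open>Both mixed partials take the value of the same second difference quotient at points
    within \<open>2 h\<close> of \<open>z\<close>.\<close>
  obtain p where p: "dist p z \<le> 2*h"
    "f (z + h *\<^sub>R axis j 1 + h *\<^sub>R axis i 1) - f (z + h *\<^sub>R axis i 1) - f (z + h *\<^sub>R axis j 1) + f z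
      = h^2 * A p"
    using second_difference_mvt[OF C h] unfolding A_def by blast
  obtain q where q: "dist q z \<le> 2*h"
    "f (z + h *\<^sub>R axis i 1 + h *\<^sub>R axis j 1) - f (z + h *\<^sub>R axis j 1) - f (z + h *\<^sub>R axis i 1) + f z
      = h^2 * B q"
    using second_difference_mvt[OF C h] unfolding B_def by blast
  have "h^2 * A p = h^2 * B q"
    using p(2) q(2) by (simp add: algebra_simps)
  then have "A p = B q" using h by simp
  then have "d \<le> \<bar>A p - A z\<bar> + \<bar>B q - B z\<bar>"
    unfolding d_def by linarith
  then show False using A[OF p(1)] B[OF q(1)] by linarith
qed

lemma pdiff_mset_eq:
  fixes f :: "real^'i::finite \<Rightarrow> real"
  assumes C: "Ck_on n U f" and U: "open U"
  shows "length \<gamma> \<le> n \<Longrightarrow> mset \<gamma> = mset \<gamma>' \<Longrightarrow> z \<in> U \<Longrightarrow> pdiff \<gamma> f z = pdiff \<gamma>' f z"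
proof (induction "length \<gamma>" arbitrary: \<gamma> \<gamma>' z)
  case 0
  then show ?case by simp
next
  case (Suc m)
  obtain i \<gamma>1 where \<gamma>: "\<gamma> = i # \<gamma>1" using Suc.hyps by (cases \<gamma>) auto
  obtain j \<delta> where \<gamma>': "\<gamma>' = j # \<delta>" using Suc.prems \<gamma> by (cases \<gamma>') auto
  have m: "length \<gamma>1 = m" "length \<delta> = m"
    using Suc.hyps mset_eq_length[OF Suc.prems(2)] \<gamma> \<gamma>' by auto
  show ?case
  proof (cases "i = j")
    case True
    then have "\<And>w. w \<in> U \<Longrightarrow> pdiff \<gamma>1 f w = pdiff \<delta> f w"
      using Suc.hyps Suc.prems \<gamma> \<gamma>' m by (intro Suc.hyps(1)) auto
    then show ?thesis
      using pdiff_Cons_cong_open[OF U Suc.prems(3)] \<gamma> \<gamma>' True by blast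
  next
    case False
    then have "i \<in> set \<delta>"
      using mset_eq_setD[OF Suc.prems(2)] \<gamma> \<gamma>' by auto
    define \<epsilon> where "\<epsilon> = remove1 i \<delta>"
    have \<delta>: "mset \<delta> = mset (i # \<epsilon>)" "length \<epsilon> = m - 1" "1 \<le> m"
      using \<open>i \<in> set \<delta>\<close> m by (auto simp: \<epsilon>_def length_remove1 Suc_le_eq length_pos_if_in_set)
    have "mset \<gamma>1 = mset (j # \<epsilon>)"
      using Suc.prems(2) \<gamma> \<gamma>' \<delta>(1) by (simp add: add_mset_commute)
    then have \<gamma>1: "\<And>w. w \<in> U \<Longrightarrow> pdiff \<gamma>1 f w = pdiff (j # \<epsilon>) f w"
      using Suc.prems(1) m \<gamma> by (intro Suc.hyps(1)) auto
    have C2: "Ck_on 2 U (pdiff \<epsilon> f)"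
      using Ck_on_mono[OF Ck_on_pdiff[OF C, of \<epsilon>]] Suc.prems(1) \<gamma> m \<delta> by auto
    have "pdiff \<gamma> f z = pdiff (i # j # \<epsilon>) f z"
      using pdiff_Cons_cong_open[OF U Suc.prems(3) \<gamma>1] \<gamma> by simp
    also have "\<dots> = pdiff [i,j] (pdiff \<epsilon> f) z"
      using pdiff_append[of "[i,j]" \<epsilon> f] by simp
    also have "\<dots> = pdiff [j,i] (pdiff \<epsilon> f) z"
      using pdiff_swap[OF C2 U Suc.prems(3)] by simp
    also have "\<dots> = pdiff (j # i # \<epsilon>) f z"
      using pdiff_append[of "[j,i]" \<epsilon> f] by simp
    also have "\<dots> = pdiff (j # \<delta>) f z"
    proof (rule pdiff_Cons_cong_open[OF U Suc.prems(3)])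
      fix w assume "w \<in> U"
      then show "pdiff (i # \<epsilon>) f w = pdiff \<delta> f w"
        using Suc.prems(1) \<gamma> m \<delta> by (intro Suc.hyps(1)) auto
    qed
    finally show ?thesis using \<gamma>' by simp
  qed
qed

lemma idx_eq_sum_axis: "idx good x \<beta> = (\<Sum>r\<in>UNIV. (\<beta>$r * x$r) *\<^sub>R axis (good r) (1::real))"
  unfolding idx_def
  by (auto simp: vec_eq_iff axis_def sum_component if_distrib sum.If_cases intro!: sum.cong)

lemma tendsto_idx: "((\<lambda>x. idx good x \<beta>) \<longlongrightarrow> idx good x0 \<beta>) (nhds x0)"
  unfolding idx_eq_sum_axis by (intro tendsto_intros filterlim_ident)

lemma idx_zero [simp]: "idx good 0 \<beta> = 0"
  unfolding idx_def by (simp add: vec_eq_iff)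

lemma idx_add_axis:
  "idx good (z + t *\<^sub>R axis i 1) \<beta> = idx good z \<beta> + (t * \<beta>$i) *\<^sub>R axis (good i) 1"
proof -
  have "(\<Sum>r\<in>UNIV. (\<beta>$r * (t *\<^sub>R axis i 1 :: real^_)$r) *\<^sub>R axis (good r) (1::real))
      = (\<Sum>r\<in>UNIV. if r = i then (t * \<beta>$i) *\<^sub>R axis (good i) 1 else 0)"
    by (intro sum.cong) (auto simp: axis_def)
  then show ?thesis
    by (simp add: idx_eq_sum_axis algebra_simps sum.distrib)
qed

lemma surj_idx:
  fixes good :: "'r::finite \<Rightarrow> 'k::finite"
  assumes "surj good"
  shows "\<exists>x \<beta>. idx good x \<beta> = u"
proof -
  define \<beta> :: "real^'r" where "\<beta> = (\<chi> r. if r = inv good (good r) then u $ good r else 0)"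
  have "idx good 1 \<beta> $ k = u $ k" for k
  proof -
    have "idx good 1 \<beta> $ k = (\<Sum>r\<in>{r. good r = k}. if r = inv good k then u $ k else 0)"
      unfolding idx_def \<beta>_def by (auto intro!: sum.cong)
    also have "\<dots> = u $ k"
      using surj_f_inv_f[OF assms, of k] by (simp add: sum.delta)
    finally show ?thesis .
  qed
  then show ?thesis by (auto simp: vec_eq_iff)
qed

lemma pdiff_comp_idx:
  fixes G :: "real^'k::finite \<Rightarrow> real" and good :: "'r::finite \<Rightarrow> 'k"
  assumes G: "Ck_on n U G" and U: "open U"
  shows "length \<gamma> \<le> n \<Longrightarrow> idx good z \<beta> \<in> U \<Longrightarrow>
    pdiff \<gamma> (\<lambda>x. G (idx good x \<beta>)) z
      = prod_list (map (\<lambda>r. \<beta>$r) \<gamma>) * pdiff (map good \<gamma>) G (idx good z \<beta>)"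
proof (induction \<gamma> arbitrary: z)
  case Nil
  then show ?case by simp
next
  case (Cons i \<gamma>)
  define u where "u = idx good z \<beta>"
  define c where "c = prod_list (map (\<lambda>r. \<beta>$r) \<gamma>)"
  define H where "H = (\<lambda>s. pdiff (map good \<gamma>) G (u + s *\<^sub>R axis (good i) 1))"
  have "((\<lambda>t::real. u + (t * \<beta>$i) *\<^sub>R axis (good i) 1) \<longlongrightarrow> u + (0 * \<beta>$i) *\<^sub>R axis (good i) 1) (nhds 0)"
    by (intro tendsto_intros filterlim_ident)
  then have "eventually (\<lambda>t::real. u + (t * \<beta>$i) *\<^sub>R axis (good i) 1 \<in> U) (nhds 0)"
    using Cons.prems U by (intro topological_tendstoD) (auto simp: u_def)
  then have "eventually (\<lambda>t. pdiff \<gamma> (\<lambda>x. G (idx good x \<beta>)) (z + t *\<^sub>R axis i 1) = c * H (\<beta>$i * t)) (nhds 0)"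
    by (rule eventually_mono)
       (use Cons.IH Cons.prems in \<open>simp add: idx_add_axis u_def c_def H_def mult.commute\<close>)
  then have "pdiff (i # \<gamma>) (\<lambda>x. G (idx good x \<beta>)) z = deriv (\<lambda>t. c * H (\<beta>$i * t)) 0"
    by (simp add: deriv_cong_ev)
  moreover have "pd_exists (good i # map good \<gamma>) G u"
    using Ck_onD(1)[OF G, of "good i # map good \<gamma>" u] Cons.prems by (simp add: u_def)
  then have "(H has_real_derivative deriv H 0) (at 0)"
    by (simp add: H_def DERIV_deriv_iff_real_differentiable)
  then have "((\<lambda>t. c * H (\<beta>$i * t)) has_real_derivative c * (deriv H 0 * \<beta>$i)) (at 0)"
    by (intro DERIV_cmult DERIV_chain2[where f = H]) (auto intro!: derivative_eq_intros)
  ultimately show ?case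
    by (simp add: DERIV_imp_deriv c_def H_def u_def)
qed

section \<open>The envelope theorem\<close>

definition maximizers :: "('a::real_inner \<Rightarrow> ereal) \<Rightarrow> 'a set \<Rightarrow> 'a \<Rightarrow> 'a set" where
  "maximizers F S u = {y \<in> S. \<forall>z\<in>S. ereal (z \<bullet> u) + F z \<le> ereal (y \<bullet> u) + F y}"

definition value_fun :: "('a::real_inner \<Rightarrow> ereal) \<Rightarrow> 'a set \<Rightarrow> 'a \<Rightarrow> real" where
  "value_fun F S u = real_of_ereal (Sup {ereal (y \<bullet> u) + F y | y. y \<in> S})"

lemma value_fun_maximizer:
  fixes F :: "'a::real_inner \<Rightarrow> ereal"
  assumes noinf: "\<And>y. F y \<noteq> \<infinity>" and fin: "y1 \<in> S" "F y1 \<noteq> -\<infinity>"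
    and y0: "y0 \<in> maximizers F S u"
  shows "F y0 = ereal (real_of_ereal (F y0))"
    and "Sup {ereal (y \<bullet> u) + F y | y. y \<in> S} = ereal (y0 \<bullet> u + real_of_ereal (F y0))"
    and "value_fun F S u = y0 \<bullet> u + real_of_ereal (F y0)"
proof -
  have max: "y0 \<in> S" "\<And>z. z \<in> S \<Longrightarrow> ereal (z \<bullet> u) + F z \<le> ereal (y0 \<bullet> u) + F y0"
    using y0 unfolding maximizers_def by auto
  have "F y0 \<noteq> -\<infinity>"
  proof
    assume "F y0 = -\<infinity>"
    then have "ereal (y1 \<bullet> u) + F y1 \<le> -\<infinity>" using max(2)[OF fin(1)] by simp
    then show False using fin noinf[of y1] by (cases "F y1") auto
  qed
  then show F: "F y0 = ereal (real_of_ereal (F y0))"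
    using noinf[of y0] by (cases "F y0") auto
  have "Sup {ereal (y \<bullet> u) + F y | y. y \<in> S} = ereal (y0 \<bullet> u) + F y0"
    by (rule Sup_eqI) (use max in auto)
  then show "Sup {ereal (y \<bullet> u) + F y | y. y \<in> S} = ereal (y0 \<bullet> u + real_of_ereal (F y0))"
    using F by (metis plus_ereal.simps(1))
  then show "value_fun F S u = y0 \<bullet> u + real_of_ereal (F y0)"
    unfolding value_fun_def by simp
qed

lemma value_fun_subgradient:
  fixes F :: "'a::real_inner \<Rightarrow> ereal"
  assumes noinf: "\<And>y. F y \<noteq> \<infinity>" and fin: "y1 \<in> S" "F y1 \<noteq> -\<infinity>"
    and y0: "y0 \<in> maximizers F S u" and y0': "y0' \<in> maximizers F S u'"
  shows "value_fun F S u + y0 \<bullet> (u' - u) \<le> value_fun F S u'"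
proof -
  note val = value_fun_maximizer[OF noinf fin y0]
  note val' = value_fun_maximizer[OF noinf fin y0']
  have "ereal (y0 \<bullet> u') + F y0 \<le> Sup {ereal (y \<bullet> u') + F y | y. y \<in> S}"
    by (rule Sup_upper) (use y0 in \<open>auto simp: maximizers_def\<close>)
  then have "ereal (y0 \<bullet> u' + real_of_ereal (F y0)) \<le> ereal (value_fun F S u')"
    using val(1) val'(2,3) by (metis plus_ereal.simps(1))
  then show ?thesis using val(3) by (simp add: inner_diff_right)
qed

lemma pdiff_value_fun_eq_maximizer:
  fixes F :: "real^'k::finite \<Rightarrow> ereal"
  assumes noinf: "\<And>y. F y \<noteq> \<infinity>" and fin: "y1 \<in> S" "F y1 \<noteq> -\<infinity>"
    and nonempty: "\<And>v. \<exists>y. y \<in> maximizers F S v"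
    and y0: "y0 \<in> maximizers F S u"
    and pd: "pd_exists [k] (value_fun F S) u"
  shows "pdiff [k] (value_fun F S) u = y0 $ k"
proof -
  define W where "W = (\<lambda>t. value_fun F S (u + t *\<^sub>R axis k 1))"
  define \<phi> where "\<phi> t = W t - W 0 - t * y0 $ k" for t
  have "(W has_real_derivative pdiff [k] (value_fun F S) u) (at 0)"
    using pd by (simp add: W_def DERIV_deriv_iff_real_differentiable)
  then have "(\<phi> has_real_derivative pdiff [k] (value_fun F S) u - y0 $ k) (at 0)"
    unfolding \<phi>_def by (auto intro!: derivative_eq_intros)
  moreover have "\<phi> 0 \<le> \<phi> t" for t
  proof -
    obtain y where "y \<in> maximizers F S (u + t *\<^sub>R axis k 1)" using nonempty by blast
    from value_fun_subgradient[OF noinf fin y0 this] show ?thesis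
      by (simp add: \<phi>_def W_def inner_axis mult.commute)
  qed
  ultimately have "pdiff [k] (value_fun F S) u - y0 $ k = 0"
    by (meson DERIV_local_min zero_less_one)
  then show ?thesis by simp
qed

text \<open>Convexity of the value function in the form needed: the derivative along axis \<open>k\<close> is
  the \<open>k\<close>-th coordinate of a maximizer, which is nondecreasing in the \<open>k\<close>-th price by the
  subgradient inequality.\<close>

lemma pdiff_value_fun_diag_nonneg:
  fixes F :: "real^'k::finite \<Rightarrow> ereal"
  assumes noinf: "\<And>y. F y \<noteq> \<infinity>" and fin: "y1 \<in> S" "F y1 \<noteq> -\<infinity>"
    and nonempty: "\<And>v. \<exists>y. y \<in> maximizers F S v"
    and C: "Ck_on 2 U (value_fun F S)" and U: "open U" "u \<in> U"
  shows "0 \<le> pdiff [k,k] (value_fun F S) u"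
proof -
  define ys where "ys v = (SOME y. y \<in> maximizers F S v)" for v
  have ys: "ys v \<in> maximizers F S v" for v
    unfolding ys_def using nonempty by (metis someI_ex)
  define g where "g = (\<lambda>t. pdiff [k] (value_fun F S) (u + t *\<^sub>R axis k 1))"
  have g: "g t = ys (u + t *\<^sub>R axis k 1) $ k" if "u + t *\<^sub>R axis k 1 \<in> U" for t
    unfolding g_def
    by (rule pdiff_value_fun_eq_maximizer[OF noinf fin nonempty ys Ck_onD(1)[OF C _ that]]) simp
  have mono: "0 \<le> t * (g t - g 0)" if "u + t *\<^sub>R axis k 1 \<in> U" for t
  proof -
    define a where "a = u + t *\<^sub>R axis k 1"
    have "value_fun F S a + ys a \<bullet> (u - a) \<le> value_fun F S u"
      and "value_fun F S u + ys u \<bullet> (a - u) \<le> value_fun F S a"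
      by (rule value_fun_subgradient[OF noinf fin ys ys])+
    then have "0 \<le> t * (ys a $ k - ys u $ k)"
      by (simp add: a_def inner_axis algebra_simps)
    then show ?thesis using g[OF that] g[of 0] U by (simp add: a_def)
  qed
  have "pd_exists [k,k] (value_fun F S) u"
    using Ck_onD(1)[OF C _ U(2), of "[k,k]"] by simp
  then have "(g has_real_derivative pdiff [k,k] (value_fun F S) u) (at 0)"
    by (simp add: g_def DERIV_deriv_iff_real_differentiable)
  then have lim: "((\<lambda>t. (g t - g 0) / (t - 0)) \<longlongrightarrow> pdiff [k,k] (value_fun F S) u) (at 0)"
    using has_field_derivative_iff by blast
  have "eventually (\<lambda>t::real. u + t *\<^sub>R axis k 1 \<in> U) (nhds 0)"
    using tendsto_along_axis[of u k] U unfolding tendsto_def by blast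
  then have "eventually (\<lambda>t. 0 \<le> (g t - g 0) / (t - 0)) (at 0)"
    unfolding eventually_at_filter
    by (rule eventually_mono)
       (use mono in \<open>force simp: zero_le_mult_iff zero_le_divide_iff\<close>)
  then show ?thesis using tendsto_lowerbound[OF lim] by simp
qed

lemma deriv_eq_if_eventually_eq_right:
  fixes h1 h2 :: "real \<Rightarrow> real"
  assumes "h1 differentiable (at 0)" and "h2 differentiable (at 0)"
    and eq: "eventually (\<lambda>t. 0 \<le> t \<longrightarrow> h1 t = h2 t) (nhds 0)"
  shows "deriv h1 0 = deriv h2 0"
proof -
  have lim1: "((\<lambda>t. (h1 t - h1 0) / (t - 0)) \<longlongrightarrow> deriv h1 0) (at_right 0)"
    and lim2: "((\<lambda>t. (h2 t - h2 0) / (t - 0)) \<longlongrightarrow> deriv h2 0) (at_right 0)"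
    using assms(1,2) DERIV_deriv_iff_real_differentiable has_field_derivative_at_within
      has_field_derivative_iff by blast+
  have "h1 0 = h2 0" using eventually_nhds_x_imp_x[OF eq] by simp
  have "eventually (\<lambda>t. (h1 t - h1 0) / (t - 0) = (h2 t - h2 0) / (t - 0)) (at_right 0)"
    using eq unfolding eventually_at_filter by (rule eventually_mono) (auto simp: \<open>h1 0 = h2 0\<close>)
  from tendsto_cong[OF this] lim1
  have "((\<lambda>t. (h2 t - h2 0) / (t - 0)) \<longlongrightarrow> deriv h1 0) (at_right 0)" ..
  from tendsto_unique[OF _ this lim2] show ?thesis by simp
qed

lemma pdiff_eq_if_eq_on_orthant:
  fixes f g :: "real^'i::finite \<Rightarrow> real"
  assumes W: "open W" and eq: "\<And>x. x \<in> W \<Longrightarrow> (\<forall>r. 0 \<le> x$r) \<Longrightarrow> f x = g x"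
  shows "z \<in> W \<Longrightarrow> (\<forall>r. 0 \<le> z$r) \<Longrightarrow> pd_exists \<gamma> f z \<Longrightarrow> pd_exists \<gamma> g z \<Longrightarrow>
    pdiff \<gamma> f z = pdiff \<gamma> g z"
proof (induction \<gamma> arbitrary: z)
  case Nil
  then show ?case using eq by simp
next
  case (Cons i \<gamma>)
  have "eventually (\<lambda>w. w \<in> W) (nhds z)"
    using W Cons.prems(1) eventually_nhds by blast
  moreover have "eventually (pd_exists \<gamma> f) (nhds z)" "eventually (pd_exists \<gamma> g) (nhds z)"
    using Cons.prems(3,4) by auto
  ultimately have "eventually (\<lambda>w. w \<in> W \<and> pd_exists \<gamma> f w \<and> pd_exists \<gamma> g w) (nhds z)"
    by eventually_elim auto
  from eventually_along_axis[OF this, of i]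
  have "eventually (\<lambda>t. 0 \<le> t \<longrightarrow>
      pdiff \<gamma> f (z + t *\<^sub>R axis i 1) = pdiff \<gamma> g (z + t *\<^sub>R axis i 1)) (nhds 0)"
    by (rule eventually_mono) (use Cons.IH Cons.prems(2) in \<open>auto simp: axis_def\<close>)
  then have "deriv (\<lambda>t. pdiff \<gamma> f (z + t *\<^sub>R axis i 1)) 0 = deriv (\<lambda>t. pdiff \<gamma> g (z + t *\<^sub>R axis i 1)) 0"
    by (rule deriv_eq_if_eventually_eq_right[rotated 2]) (use Cons.prems(3,4) in auto)
  then show ?case by simp
qed

lemma integral_Ybar_xb_component:
  assumes "sigma_finite_measure \<nu>" "sigma_finite_measure \<mu>"
    and "integrable (\<nu> \<Otimes>\<^sub>M \<mu>) (\<lambda>z. Y x (fst z) (snd z))"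
  shows "(\<integral>\<beta>. Ybar_xb \<mu> Y x \<beta> $ k \<partial>\<nu>) = Ybar \<nu> \<mu> Y x $ k"
proof -
  interpret pair_sigma_finite \<nu> \<mu>
    using assms by (simp add: pair_sigma_finite_def)
  have "(\<integral>\<beta>. Ybar_xb \<mu> Y x \<beta> $ k \<partial>\<nu>) = (\<integral>\<beta>. Ybar_xb \<mu> Y x \<beta> \<partial>\<nu>) $ k"
    using integral_bounded_linear[OF bounded_linear_vec_nth integrable_fst'[OF assms(3)]]
    by (simp add: Ybar_xb_def)
  also have "\<dots> = Ybar \<nu> \<mu> Y x $ k"
    using integral_fst'[OF assms(3)] by (simp add: Ybar_xb_def Ybar_def)
  finally show ?thesis .
qed

lemma (in prob_space) indep_varI_prob_mult:
  assumes X: "random_variable S X" and Y: "random_variable T Y"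
    and mult: "\<And>A C. A \<in> sets S \<Longrightarrow> C \<in> sets T \<Longrightarrow>
      prob {\<omega>\<in>space M. X \<omega> \<in> A \<and> Y \<omega> \<in> C}
        = prob {\<omega>\<in>space M. X \<omega> \<in> A} * prob {\<omega>\<in>space M. Y \<omega> \<in> C}"
  shows "indep_var S X T Y"
  unfolding indep_var_def indep_vars_def2
proof (intro conjI ballI)
  fix i :: bool
  show "random_variable (case_bool S T i) (case_bool X Y i)"
    using X Y by (cases i) auto
next
  have indep: "indep_set {X -` A \<inter> space M |A. A \<in> sets S} {Y -` C \<inter> space M |C. C \<in> sets T}"
  proof (rule indep_setI)
    show "{X -` A \<inter> space M |A. A \<in> sets S} \<subseteq> events"
      and "{Y -` C \<inter> space M |C. C \<in> sets T} \<subseteq> events"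
      using X Y by (auto simp: measurable_def)
  next
    fix a b
    assume "a \<in> {X -` A \<inter> space M |A. A \<in> sets S}" "b \<in> {Y -` C \<inter> space M |C. C \<in> sets T}"
    then obtain A C where "A \<in> sets S" "a = {\<omega>\<in>space M. X \<omega> \<in> A}"
      and "C \<in> sets T" "b = {\<omega>\<in>space M. Y \<omega> \<in> C}"
      by blast
    moreover have "a \<inter> b = {\<omega>\<in>space M. X \<omega> \<in> A \<and> Y \<omega> \<in> C}"
      using calculation by auto
    ultimately show "prob (a \<inter> b) = prob a * prob b"
      using mult by simp
  qed
  have "(\<lambda>i. {case_bool X Y i -` A \<inter> space M |A. A \<in> sets (case_bool S T i)})
      = case_bool {X -` A \<inter> space M |A. A \<in> sets S} {Y -` C \<inter> space M |C. C \<in> sets T}"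
    by (rule ext) (simp split: bool.split)
  with indep show "indep_sets (\<lambda>i. {case_bool X Y i -` A \<inter> space M |A. A \<in> sets (case_bool S T i)}) UNIV"
    unfolding indep_set_def by simp
qed

lemma indep_var_coordinate_rest:
  fixes \<nu> :: "(real^'r::finite) measure" and g :: "real^'r \<Rightarrow> real"
  assumes f: "assm_f r1 \<nu>" and "prob_space \<nu>" and sets: "sets \<nu> = sets borel"
    and g: "g \<in> borel_measurable borel"
  shows "prob_space.indep_var \<nu> borel (\<lambda>\<beta>. \<beta>$r1) borel (\<lambda>\<beta>. g (\<chi> r. if r = r1 then 0 else \<beta>$r))"
proof -
  interpret prob_space \<nu> by fact
  define P :: "real^'r \<Rightarrow> real^'r" where "P = (\<lambda>\<beta>. \<chi> r. if r = r1 then 0 else \<beta>$r)"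
  have "continuous_on UNIV (\<lambda>\<beta>::real^'r. if r = r1 then 0 else \<beta>$r)" for r
    by (cases "r = r1") (auto intro!: continuous_intros)
  then have P: "P \<in> borel_measurable borel"
    unfolding P_def by (intro borel_measurable_continuous_onI continuous_on_vec_lambda)
  have "indep_var borel (\<lambda>\<beta>. \<beta>$r1) borel (\<lambda>\<beta>. g (P \<beta>))"
  proof (rule indep_varI_prob_mult)
    show "random_variable borel (\<lambda>\<beta>. \<beta>$r1)" "random_variable borel (\<lambda>\<beta>. g (P \<beta>))"
      using P g by (simp_all add: measurable_cong_sets[OF sets refl])
  next
    fix A C :: "real set" assume "A \<in> sets borel" "C \<in> sets borel"
    moreover have "g -` C \<in> sets borel"
      using measurable_sets[OF g \<open>C \<in> sets borel\<close>] by simp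
    ultimately show "prob {\<beta>\<in>space \<nu>. \<beta>$r1 \<in> A \<and> g (P \<beta>) \<in> C}
        = prob {\<beta>\<in>space \<nu>. \<beta>$r1 \<in> A} * prob {\<beta>\<in>space \<nu>. g (P \<beta>) \<in> C}"
      using f[unfolded assm_f_def, THEN conjunct1, rule_format, of A "g -` C"] by (simp add: P_def)
  qed
  then show ?thesis by (simp add: P_def)
qed

lemma moment_Cons_indep:
  fixes \<nu> :: "(real^'r::finite) measure"
  assumes f: "assm_f r1 \<nu>" and "prob_space \<nu>" and "sets \<nu> = sets borel"
    and "r1 \<notin> set rs" and "moment_exists \<nu> rs"
  shows "moment \<nu> (r1 # rs) = (\<integral>\<beta>. \<beta>$r1 \<partial>\<nu>) * moment \<nu> rs"
proof -
  interpret prob_space \<nu> by fact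
  define g :: "real^'r \<Rightarrow> real" where "g z = prod_list (map (\<lambda>r. z$r) rs)" for z
  have "continuous_on UNIV g"
    unfolding g_def by (induction rs) (auto intro!: continuous_intros)
  then have "indep_var borel (\<lambda>\<beta>. \<beta>$r1) borel (\<lambda>\<beta>. g (\<chi> r. if r = r1 then 0 else \<beta>$r))"
    by (intro indep_var_coordinate_rest assms borel_measurable_continuous_onI)
  moreover have "g (\<chi> r. if r = r1 then 0 else \<beta>$r) = prod_list (map (\<lambda>r. \<beta>$r) rs)" for \<beta>
    unfolding g_def using \<open>r1 \<notin> set rs\<close> by (intro arg_cong[where f = prod_list] map_cong) auto
  ultimately have "indep_var borel (\<lambda>\<beta>. \<beta>$r1) borel (\<lambda>\<beta>. prod_list (map (\<lambda>r. \<beta>$r) rs))"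
    by simp
  from indep_var_lebesgue_integral[OF this] show ?thesis
    using f assms(5) unfolding assm_f_def moment_exists_def moment_def by simp
qed

section \<open>A common scale factor\<close>

lemma eq_replicate_if_update_invariant:
  assumes inv: "\<And>ks j a. length ks = M \<Longrightarrow> j < M \<Longrightarrow> f (ks[j := a]) = f ks"
    and ks: "length ks = M"
  shows "f ks = f (replicate M a)"
proof -
  have "f ks = f (replicate n a @ drop n ks)" if "n \<le> M" for n
    using that
  proof (induction n)
    case (Suc n)
    have "drop n ks = ks ! n # drop (Suc n) ks"
      using Suc.prems ks by (simp add: Cons_nth_drop_Suc)
    then have "replicate (Suc n) a @ drop (Suc n) ks = (replicate n a @ drop n ks)[n := a]"
      by (simp add: list_update_append replicate_app_Cons_same)
    then show ?case
      using Suc inv[of "replicate n a @ drop n ks" n a] ks by simp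
  qed simp
  from this[of M] show ?thesis using ks by simp
qed

text \<open>Symmetry of \<open>c\<close> and \<open>c'\<close> lets the last index trade places with any other one, so the
  ratio \<open>m' rs / m rs\<close> does not change when one entry of \<open>map good rs\<close> changes.\<close>

lemma common_scale_factor:
  fixes c c' :: "'k list \<Rightarrow> real" and m m' :: "'r list \<Rightarrow> real" and good :: "'r \<Rightarrow> 'k"
  assumes eq: "\<And>rs k. length rs = M \<Longrightarrow> m rs * c (map good rs @ [k]) = m' rs * c' (map good rs @ [k])"
    and c'_nonzero: "\<And>ks. length ks = Suc M \<Longrightarrow> c' ks \<noteq> 0"
    and relevant: "\<And>ks. length ks = M \<Longrightarrow> \<exists>rs. map good rs = ks \<and> m rs \<noteq> 0"
    and c_sym: "\<And>ks ks'. length ks = Suc M \<Longrightarrow> mset ks = mset ks' \<Longrightarrow> c ks = c ks'"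
    and c'_sym: "\<And>ks ks'. length ks = Suc M \<Longrightarrow> mset ks = mset ks' \<Longrightarrow> c' ks = c' ks'"
  shows "\<exists>s. (\<forall>rs. length rs = M \<longrightarrow> m' rs = s * m rs) \<and>
             (\<forall>ks. length ks = Suc M \<longrightarrow> c ks = s * c' ks)"
proof -
  define R where "R ks = (SOME rs. map good rs = ks \<and> m rs \<noteq> 0)" for ks
  have R: "map good (R ks) = ks" "m (R ks) \<noteq> 0" if "length ks = M" for ks
    using someI_ex[OF relevant[OF that]] unfolding R_def by blast+
  define ratio where "ratio ks = m' (R ks) / m (R ks)" for ks
  have c_ratio: "c (ks @ [k]) = ratio ks * c' (ks @ [k])" if "length ks = M" for ks k
  proof -
    have "length (R ks) = M"
      using R(1)[OF that] that by (metis length_map)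
    then have "m (R ks) * c (ks @ [k]) = m' (R ks) * c' (ks @ [k])"
      using eq[of "R ks" k] R(1)[OF that] by simp
    then show ?thesis using R(2)[OF that] unfolding ratio_def by (simp add: field_simps)
  qed
  have m'_ratio: "m' rs = ratio (map good rs) * m rs" if "length rs = M" for rs
  proof -
    have "m rs * (ratio (map good rs) * c' (map good rs @ [undefined]))
        = m' rs * c' (map good rs @ [undefined])"
      using eq[OF that] c_ratio[of "map good rs"] that by simp
    moreover have "c' (map good rs @ [undefined]) \<noteq> 0"
      using c'_nonzero that by simp
    ultimately show ?thesis by (simp add: algebra_simps)
  qed
  have ratio_update: "ratio (ks[j := a]) = ratio ks" if "length ks = M" "j < M" for ks j a
  proof -
    have "mset (ks @ [a]) = mset (ks[j := a] @ [ks ! j])"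
      using that by (simp add: mset_update insert_DiffM)
    then have "c (ks @ [a]) = c (ks[j := a] @ [ks ! j])" "c' (ks @ [a]) = c' (ks[j := a] @ [ks ! j])"
      using c_sym[of "ks @ [a]"] c'_sym[of "ks @ [a]"] that by simp_all
    moreover have "c' (ks @ [a]) \<noteq> 0" using c'_nonzero that by simp
    ultimately show ?thesis
      using c_ratio[OF that(1), of a] c_ratio[of "ks[j := a]" "ks ! j"] that by simp
  qed
  have ratio_const: "ratio ks = ratio (replicate M undefined)" if "length ks = M" for ks
    using eq_replicate_if_update_invariant[of M ratio, OF ratio_update that] .
  show ?thesis
  proof (intro exI[of _ "ratio (replicate M undefined)"] conjI allI impI)
    fix rs :: "'r list" assume "length rs = M"
    then show "m' rs = ratio (replicate M undefined) * m rs"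
      using m'_ratio ratio_const[of "map good rs"] by simp
  next
    fix ks :: "'k list" assume "length ks = Suc M"
    then obtain ks0 k where ks: "ks = ks0 @ [k]" and M: "length ks0 = M"
      by (cases ks rule: rev_cases) auto
    then show "c ks = ratio (replicate M undefined) * c' ks"
      using c_ratio[OF M, of k] ratio_const[OF M] by simp
  qed
qed

lemma enat_le_if_le: "m \<le> n \<Longrightarrow> enat n \<le> N \<Longrightarrow> enat m \<le> N"
  by (metis enat_ord_simps(1) order_trans)

locale perturbed_utility_model =
  fixes good :: "'r::finite \<Rightarrow> 'k::finite" and r1 :: 'r and Mbar :: enat
    and \<nu> :: "(real^'r) measure" and \<mu> :: "'e measure" and B :: "(real^'k) set"
    and D :: "real^'k \<Rightarrow> 'e \<Rightarrow> ereal" and Y :: "real^'r \<Rightarrow> real^'r \<Rightarrow> 'e \<Rightarrow> real^'k"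
  assumes model: "model_assumptions good r1 Mbar \<nu> \<mu> B D Y"
begin

abbreviation V :: "real^'k \<Rightarrow> real" where "V \<equiv> Vfun \<mu> B D"

lemma prob_space_nu: "prob_space \<nu>" and sets_nu: "sets \<nu> = sets borel"
  and assm_f: "assm_f r1 \<nu>"
  using model unfolding model_assumptions_def assm_a_def by auto

lemma integral_Ybar_xb_eq_Ybar: "(\<integral>\<beta>. Ybar_xb \<mu> Y x \<beta> $ k \<partial>\<nu>) = Ybar \<nu> \<mu> Y x $ k"
  using model
  by (intro integral_Ybar_xb_component)
     (auto simp: model_assumptions_def assm_a_def prob_space_imp_sigma_finite)

lemma V_eq_value_fun: "V = value_fun (Dbar \<mu> B D) (Bbar B)"
  unfolding Vfun_def value_fun_def by (rule ext) simp

lemma Dbar_not_PInfty: "Dbar \<mu> B D y \<noteq> \<infinity>"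
  using model unfolding model_assumptions_def assm_b_def by auto

lemma Dbar_finite_somewhere: obtains y1 where "y1 \<in> Bbar B" "Dbar \<mu> B D y1 \<noteq> -\<infinity>"
  using model unfolding model_assumptions_def assm_b_def by auto

lemma Ybar_xb_maximizer: "Ybar_xb \<mu> Y x \<beta> \<in> maximizers (Dbar \<mu> B D) (Bbar B) (idx good x \<beta>)"
  using model unfolding model_assumptions_def assm_b_def maximizers_def by blast

context
  fixes M :: nat
  assumes M: "1 \<le> M" "enat M \<le> Mbar"
begin

lemma assm_d: "assm_d M \<nu> \<mu> B D Y" and assm_e: "assm_e M good \<nu>"
  using model M unfolding model_assumptions_def by auto

lemma surj_good: "surj good"
proof -
  have "enat 1 \<le> Mbar" using M by (rule enat_le_if_le)
  then have "assm_e 1 good \<nu>" using model unfolding model_assumptions_def by auto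
  have "\<exists>r. good r = k" for k
  proof -
    obtain rs where "map good rs = [k]"
      using \<open>assm_e 1 good \<nu>\<close> unfolding assm_e_def by (metis One_nat_def length_Cons list.size(3))
    then show ?thesis by (cases rs) auto
  qed
  then show ?thesis unfolding surj_def by metis
qed

lemma maximizers_nonempty: "\<exists>y. y \<in> maximizers (Dbar \<mu> B D) (Bbar B) u"
proof -
  obtain x \<beta> where "idx good x \<beta> = u" using surj_idx[OF surj_good] by blast
  then show ?thesis using Ybar_xb_maximizer by blast
qed

lemma V_smooth: obtains U where "open U" "0 \<in> U" "Ck_on (Suc M) U V"
  using assm_d unfolding assm_d_def by auto

text \<open>The envelope theorem turns the choice into a derivative of \<open>V\<close> at the indices, so
  each derivative in \<open>x\<close> brings down one coefficient by the chain rule.\<close>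

lemma pdiff_Ybar_xb:
  assumes "length \<gamma> \<le> M"
  shows "pdiff \<gamma> (\<lambda>x. Ybar_xb \<mu> Y x \<beta> $ k) 0
    = prod_list (map (\<lambda>r. \<beta>$r) \<gamma>) * pdiff (map good \<gamma> @ [k]) V 0"
proof -
  obtain U where U: "open U" "0 \<in> U" "Ck_on (Suc M) U V" by (rule V_smooth)
  obtain y1 where y1: "y1 \<in> Bbar B" "Dbar \<mu> B D y1 \<noteq> -\<infinity>" by (rule Dbar_finite_somewhere)
  have "\<forall>\<^sub>F x in nhds 0. idx good x \<beta> \<in> U"
    using tendsto_idx[of good \<beta> 0] U(1,2) unfolding tendsto_def by simp
  then have "\<forall>\<^sub>F x in nhds 0. Ybar_xb \<mu> Y x \<beta> $ k = pdiff [k] V (idx good x \<beta>)"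
  proof (rule eventually_mono)
    fix x assume "idx good x \<beta> \<in> U"
    then have "pd_exists [k] V (idx good x \<beta>)"
      by (rule Ck_onD(1)[OF U(3), rotated]) simp
    then show "Ybar_xb \<mu> Y x \<beta> $ k = pdiff [k] V (idx good x \<beta>)"
      unfolding V_eq_value_fun
      using pdiff_value_fun_eq_maximizer[OF Dbar_not_PInfty y1 maximizers_nonempty Ybar_xb_maximizer]
      by simp
  qed
  then have "pdiff \<gamma> (\<lambda>x. Ybar_xb \<mu> Y x \<beta> $ k) 0 = pdiff \<gamma> (\<lambda>x. pdiff [k] V (idx good x \<beta>)) 0"
    by (rule pdiff_cong_nhds)
  also have "\<dots> = prod_list (map (\<lambda>r. \<beta>$r) \<gamma>) * pdiff (map good \<gamma>) (pdiff [k] V) (idx good 0 \<beta>)"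
  proof (rule pdiff_comp_idx[OF _ U(1)])
    show "Ck_on M U (pdiff [k] V)"
      using Ck_on_pdiff[OF U(3), of "[k]"] by simp
  qed (use assms U(2) in simp_all)
  also have "\<dots> = prod_list (map (\<lambda>r. \<beta>$r) \<gamma>) * pdiff (map good \<gamma> @ [k]) V 0"
    by (simp add: pdiff_append del: pdiff.simps)
  finally show ?thesis .
qed

lemma pdiff_Ybar:
  assumes "length rs = M"
  shows "pdiff rs (\<lambda>x. Ybar \<nu> \<mu> Y x $ k) 0 = moment \<nu> rs * pdiff (map good rs @ [k]) V 0"
proof -
  have "pdiff rs (\<lambda>x. Ybar \<nu> \<mu> Y x $ k) 0 = pdiff rs (\<lambda>x. \<integral>\<beta>. Ybar_xb \<mu> Y x \<beta> $ k \<partial>\<nu>) 0"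
    by (simp only: integral_Ybar_xb_eq_Ybar)
  also have "\<dots> = (\<integral>\<beta>. pdiff rs (\<lambda>x. Ybar_xb \<mu> Y x \<beta> $ k) 0 \<partial>\<nu>)"
    using assm_d assms unfolding assm_d_def by blast
  also have "\<dots> = (\<integral>\<beta>. prod_list (map (\<lambda>r. \<beta>$r) rs) * pdiff (map good rs @ [k]) V 0 \<partial>\<nu>)"
    using pdiff_Ybar_xb assms by (simp del: pdiff.simps)
  also have "\<dots> = moment \<nu> rs * pdiff (map good rs @ [k]) V 0"
    unfolding moment_def by (rule integral_mult_left_zero)
  finally show ?thesis .
qed

lemma pd_exists_Ybar: "length rs = M \<Longrightarrow> pd_exists rs (\<lambda>x. Ybar \<nu> \<mu> Y x $ k) 0"
  using assm_d unfolding assm_d_def integral_Ybar_xb_eq_Ybar by blast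

lemma pdiff_V_mset_eq:
  assumes "length \<gamma> = Suc M" "mset \<gamma> = mset \<gamma>'"
  shows "pdiff \<gamma> V 0 = pdiff \<gamma>' V 0"
proof -
  obtain U where U: "open U" "0 \<in> U" "Ck_on (Suc M) U V" by (rule V_smooth)
  show ?thesis using pdiff_mset_eq[OF U(3,1)] assms U(2) by simp
qed

lemma pdiff_V_nonzero: "length \<gamma> = Suc M \<Longrightarrow> pdiff \<gamma> V 0 \<noteq> 0"
  using assm_d unfolding assm_d_def by blast

lemma pdiff_V_diag_nonneg: "0 \<le> pdiff [k,k] V 0"
proof -
  obtain U where U: "open U" "0 \<in> U" "Ck_on (Suc M) U V" by (rule V_smooth)
  obtain y1 where y1: "y1 \<in> Bbar B" "Dbar \<mu> B D y1 \<noteq> -\<infinity>" by (rule Dbar_finite_somewhere)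
  have "Ck_on 2 U V" using Ck_on_mono[OF U(3)] M by simp
  then show ?thesis
    unfolding V_eq_value_fun
    by (rule pdiff_value_fun_diag_nonneg[OF Dbar_not_PInfty y1 maximizers_nonempty _ U(1,2)])
qed

lemma moment_exists: "length rs = M \<Longrightarrow> moment_exists \<nu> rs"
  using assm_d unfolding assm_d_def by blast

lemma relevant_moment: "length ks = M \<Longrightarrow> \<exists>rs. map good rs = ks \<and> moment \<nu> rs \<noteq> 0"
  using assm_e unfolding assm_e_def by blast

lemma nonzero_moment_avoiding:
  assumes "CARD('k) \<noteq> 1"
  shows "\<exists>rs. length rs = M \<and> r1 \<notin> set rs \<and> moment_exists \<nu> rs \<and> moment \<nu> rs \<noteq> 0"
proof -
  have "UNIV \<noteq> {good r1}"
  proof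
    assume "UNIV = {good r1}"
    then have "CARD('k) = Suc 0" unfolding card_1_singleton_iff by blast
    with assms show False by simp
  qed
  then obtain k where k: "k \<noteq> good r1" by blast
  obtain rs where rs: "map good rs = replicate M k" "moment \<nu> rs \<noteq> 0"
    using relevant_moment[of "replicate M k"] by auto
  have "length rs = M"
    using arg_cong[OF rs(1), of length] by simp
  moreover have "good ` set rs \<subseteq> {k}"
    using arg_cong[OF rs(1), of set] by auto
  then have "r1 \<notin> set rs" using k by auto
  ultimately show ?thesis using rs(2) moment_exists by blast
qed

end

end

section \<open>Identification\<close>

locale observationally_equivalent_models =
  m: perturbed_utility_model good r1 Mbar \<nu> \<mu> B D Y +
  m': perturbed_utility_model good r1 Mbar \<nu>' \<mu>' B' D' Y'
  for good :: "'r::finite \<Rightarrow> 'k::finite" and r1 Mbar \<nu> \<mu> B D Y \<nu>' \<mu>' B' D' Y' +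
  assumes observed: "\<exists>U. open U \<and> 0 \<in> U \<and>
    (\<forall>x\<in>U. (\<forall>r. 0 \<le> x$r) \<longrightarrow> Ybar \<nu> \<mu> Y x = Ybar \<nu>' \<mu>' Y' x)"
begin

definition identified :: "nat \<Rightarrow> bool" where
  "identified M \<longleftrightarrow> (\<forall>rs. length rs = M \<longrightarrow> moment \<nu> rs = moment \<nu>' rs) \<and>
     (\<forall>\<gamma>. length \<gamma> = Suc M \<longrightarrow> pdiff \<gamma> m.V 0 = pdiff \<gamma> m'.V 0)"

context
  fixes M :: nat
  assumes M: "1 \<le> M" "enat M \<le> Mbar"
begin

lemma moment_pdiff_V_observed:
  assumes "length rs = M"
  shows "moment \<nu> rs * pdiff (map good rs @ [k]) m.V 0 = moment \<nu>' rs * pdiff (map good rs @ [k]) m'.V 0"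
proof -
  obtain U where U: "open U" "0 \<in> U" "\<And>x. x \<in> U \<Longrightarrow> \<forall>r. 0 \<le> x$r \<Longrightarrow> Ybar \<nu> \<mu> Y x = Ybar \<nu>' \<mu>' Y' x"
    using observed by blast
  have "pdiff rs (\<lambda>x. Ybar \<nu> \<mu> Y x $ k) 0 = pdiff rs (\<lambda>x. Ybar \<nu>' \<mu>' Y' x $ k) 0"
    by (rule pdiff_eq_if_eq_on_orthant[OF U(1) _ U(2)])
       (use U(3) m.pd_exists_Ybar[OF M assms] m'.pd_exists_Ybar[OF M assms] in auto)
  then show ?thesis
    using m.pdiff_Ybar[OF M assms] m'.pdiff_Ybar[OF M assms] by simp
qed

lemma common_scale:
  "\<exists>s. (\<forall>rs. length rs = M \<longrightarrow> moment \<nu>' rs = s * moment \<nu> rs) \<and>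
       (\<forall>\<gamma>. length \<gamma> = Suc M \<longrightarrow> pdiff \<gamma> m.V 0 = s * pdiff \<gamma> m'.V 0)"
proof (rule common_scale_factor[where good = good])
  show "\<And>rs k. length rs = M \<Longrightarrow>
      moment \<nu> rs * pdiff (map good rs @ [k]) m.V 0 = moment \<nu>' rs * pdiff (map good rs @ [k]) m'.V 0"
    by (rule moment_pdiff_V_observed)
  show "\<And>\<gamma>. length \<gamma> = Suc M \<Longrightarrow> pdiff \<gamma> m'.V 0 \<noteq> 0"
    by (rule m'.pdiff_V_nonzero[OF M])
  show "\<And>ks. length ks = M \<Longrightarrow> \<exists>rs. map good rs = ks \<and> moment \<nu> rs \<noteq> 0"
    by (rule m.relevant_moment[OF M])
  show "\<And>\<gamma> \<gamma>'. length \<gamma> = Suc M \<Longrightarrow> mset \<gamma> = mset \<gamma>' \<Longrightarrow> pdiff \<gamma> m.V 0 = pdiff \<gamma>' m.V 0"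
    by (rule m.pdiff_V_mset_eq[OF M])
  show "\<And>\<gamma> \<gamma>'. length \<gamma> = Suc M \<Longrightarrow> mset \<gamma> = mset \<gamma>' \<Longrightarrow> pdiff \<gamma> m'.V 0 = pdiff \<gamma>' m'.V 0"
    by (rule m'.pdiff_V_mset_eq[OF M])
qed

end

lemma moment_singleton: "moment \<nu>0 [r] = (\<integral>\<beta>. \<beta>$r \<partial>\<nu>0)"
  by (simp add: moment_def)

text \<open>At order one the scale factor has modulus one by the scale normalization, and it is
  nonnegative because the convex function \<open>V\<close> has nonnegative diagonal second derivatives.\<close>

lemma identified_one:
  assumes scale: "\<bar>\<integral>\<beta>. \<beta>$r1 \<partial>\<nu>\<bar> = \<bar>\<integral>\<beta>. \<beta>$r1 \<partial>\<nu>'\<bar>" and M1: "enat 1 \<le> Mbar"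
  shows "identified 1"
proof -
  obtain s where s: "\<forall>rs. length rs = 1 \<longrightarrow> moment \<nu>' rs = s * moment \<nu> rs"
      "\<forall>\<gamma>. length \<gamma> = Suc 1 \<longrightarrow> pdiff \<gamma> m.V 0 = s * pdiff \<gamma> m'.V 0"
    using common_scale[OF order_refl M1] by blast
  have "moment \<nu>' [r1] = s * moment \<nu> [r1]" using s(1) by simp
  moreover have "moment \<nu> [r1] \<noteq> 0"
    using m.assm_f unfolding assm_f_def moment_singleton by simp
  ultimately have "\<bar>s\<bar> = 1"
    using scale unfolding moment_singleton by (simp add: abs_mult)
  fix k :: 'k
  have "pdiff [k,k] m.V 0 = s * pdiff [k,k] m'.V 0"
    using s(2) by (simp del: pdiff.simps)
  moreover have "0 \<le> pdiff [k,k] m.V 0"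
    by (rule m.pdiff_V_diag_nonneg[OF order_refl M1])
  moreover have "0 < pdiff [k,k] m'.V 0"
    using m'.pdiff_V_diag_nonneg[OF order_refl M1, of k] m'.pdiff_V_nonzero[OF order_refl M1, of "[k,k]"]
    by (simp del: pdiff.simps)
  ultimately have "0 \<le> s" by (simp add: zero_le_mult_iff)
  with \<open>\<bar>s\<bar> = 1\<close> have "s = 1" by simp
  then show ?thesis
    using s unfolding identified_def by (simp del: pdiff.simps)
qed

text \<open>At higher orders, independence of \<open>\<beta>\<^sub>1\<^sub>,\<^sub>1\<close> factors a moment of order \<open>M + 1\<close>
  into its already identified mean and an already identified nonzero moment of order \<open>M\<close>.\<close>

lemma identified_Suc:
  assumes "identified 1" "identified M" and M: "1 \<le> M" "enat (Suc M) \<le> Mbar"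
    and rs: "length rs = M" "r1 \<notin> set rs" "moment_exists \<nu> rs" "moment \<nu> rs \<noteq> 0"
  shows "identified (Suc M)"
proof -
  obtain s where s: "\<forall>rs. length rs = Suc M \<longrightarrow> moment \<nu>' rs = s * moment \<nu> rs"
      "\<forall>\<gamma>. length \<gamma> = Suc (Suc M) \<longrightarrow> pdiff \<gamma> m.V 0 = s * pdiff \<gamma> m'.V 0"
    using common_scale[OF _ M(2)] by auto
  have "enat M \<le> Mbar" using M(2) by (rule enat_le_if_le[OF le_SucI, OF order_refl])
  have mean: "(\<integral>\<beta>. \<beta>$r1 \<partial>\<nu>) = (\<integral>\<beta>. \<beta>$r1 \<partial>\<nu>')" "(\<integral>\<beta>. \<beta>$r1 \<partial>\<nu>) \<noteq> 0"
    using \<open>identified 1\<close> m.assm_f unfolding identified_def assm_f_def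
    by (auto simp flip: moment_singleton)
  have "moment \<nu> (r1 # rs) = (\<integral>\<beta>. \<beta>$r1 \<partial>\<nu>) * moment \<nu> rs"
    by (rule moment_Cons_indep[OF m.assm_f m.prob_space_nu m.sets_nu rs(2,3)])
  moreover have "moment \<nu>' (r1 # rs) = (\<integral>\<beta>. \<beta>$r1 \<partial>\<nu>') * moment \<nu>' rs"
    by (rule moment_Cons_indep[OF m'.assm_f m'.prob_space_nu m'.sets_nu rs(2)])
       (rule m'.moment_exists[OF M(1) \<open>enat M \<le> Mbar\<close> rs(1)])
  moreover have "moment \<nu>' rs = moment \<nu> rs"
    using \<open>identified M\<close> rs(1) unfolding identified_def by simp
  ultimately have "moment \<nu>' (r1 # rs) = moment \<nu> (r1 # rs)" "moment \<nu> (r1 # rs) \<noteq> 0"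
    using mean rs(4) by simp_all
  moreover have "moment \<nu>' (r1 # rs) = s * moment \<nu> (r1 # rs)"
    using s(1) rs(1) by simp
  ultimately have "s = 1" by simp
  then show ?thesis
    using s unfolding identified_def by (simp del: pdiff.simps)
qed

end

theorem proposition1:
  fixes good :: "'r::finite \<Rightarrow> 'k::finite" and r1 :: 'r and Mbar :: enat
    and \<nu> \<nu>' :: "(real^'r) measure"
    and \<mu> :: "'e measure" and \<mu>' :: "'f measure"
    and B B' :: "(real^'k) set"
    and D :: "real^'k \<Rightarrow> 'e \<Rightarrow> ereal" and D' :: "real^'k \<Rightarrow> 'f \<Rightarrow> ereal"
    and Y :: "real^'r \<Rightarrow> real^'r \<Rightarrow> 'e \<Rightarrow> real^'k"
    and Y' :: "real^'r \<Rightarrow> real^'r \<Rightarrow> 'f \<Rightarrow> real^'k"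
  assumes model1: "model_assumptions good r1 Mbar \<nu> \<mu> B D Y"
    and model2: "model_assumptions good r1 Mbar \<nu>' \<mu>' B' D' Y'"
    and K1: "CARD('k) = 1 \<Longrightarrow> K1_condition r1 Mbar \<nu> \<and> K1_condition r1 Mbar \<nu>'"
    and scale: "\<bar>\<integral>\<beta>. \<beta>$r1 \<partial>\<nu>\<bar> = \<bar>\<integral>\<beta>. \<beta>$r1 \<partial>\<nu>'\<bar>"
    and observed: "\<exists>U. open U \<and> 0 \<in> U \<and>
                     (\<forall>x\<in>U. (\<forall>r. 0 \<le> x$r) \<longrightarrow> Ybar \<nu> \<mu> Y x = Ybar \<nu>' \<mu>' Y' x)"
  shows "\<forall>M::nat. 1 \<le> M \<and> enat M \<le> Mbar \<longrightarrow>
           (\<forall>rs::'r list. length rs = M \<longrightarrow> moment \<nu> rs = moment \<nu>' rs) \<and>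
           (\<forall>\<gamma>::'k list. length \<gamma> = Suc M \<longrightarrow>
               pdiff \<gamma> (Vfun \<mu> B D) 0 = pdiff \<gamma> (Vfun \<mu>' B' D') 0)"
proof -
  interpret observationally_equivalent_models good r1 Mbar \<nu> \<mu> B D Y \<nu>' \<mu>' B' D' Y'
    using model1 model2 observed
    by (simp add: observationally_equivalent_models_def observationally_equivalent_models_axioms_def
        perturbed_utility_model_def)
  have "identified M" if "1 \<le> M" "enat M \<le> Mbar" for M
    using that
  proof (induction M)
    case (Suc M)
    show ?case
    proof (cases "M = 0")
      case True
      then show ?thesis using identified_one[OF scale] Suc.prems by simp
    next
      case False
      then have M: "1 \<le> M" "enat M \<le> Mbar"
        using enat_le_if_le[OF le_SucI[OF order_refl] Suc.prems(2)] by simp_all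
      obtain rs where "length rs = M" "r1 \<notin> set rs" "moment_exists \<nu> rs" "moment \<nu> rs \<noteq> 0"
        using K1 Suc.prems m.nonzero_moment_avoiding[OF M]
        unfolding K1_condition_def by (cases "CARD('k) = 1") (fastforce, blast)
      moreover have "identified 1"
        using identified_one[OF scale enat_le_if_le[OF M]] .
      ultimately show ?thesis
        using identified_Suc Suc.IH[OF M] M(1) Suc.prems(2) by blast
    qed
  qed simp
  then show ?thesis unfolding identified_def by blast
qed

end
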